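(* Let $\mathcal{H}$ be a real Hilbert space, $A:\mathcal{H}\rightrightarrows\mathcal{H}$ maximal monotone with $A^{-1}(0)\neq\emptyset$, $\theta>0$, $p\geq1$ an integer, and suppose $(x,\lambda):[0,t_0]\to\mathcal{H}\times(0,+\infty)$ is a solution of \[ \dot{x}(t)+x(t)-(I+\lambda(t)A)^{-1}x(t)=0,\qquad \lambda(t)\,\|(I+\lambda(t)A)^{-1}x(t)-x(t)\|^{p-1}=\theta, \] with $x(0)\in\{x:0\notin Ax\}$, $x$ continuously differentiable and $\lambda$ locally Lipschitz. Then $\lambda(\cdot)$ is nondecreasing.
   Context: $(I+\lambda A)^{-1}$ is the resolvent of $A$ of index $\lambda>0$. *)

theory Defs
  imports "HOL-Analysis.Analysis"
begin

definition monotone_op :: "('a::real_inner \<Rightarrow> 'a set) \<Rightarrow> bool" where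
  "monotone_op A \<longleftrightarrow> (\<forall>x y u v. u \<in> A x \<longrightarrow> v \<in> A y \<longrightarrow> inner (x - y) (u - v) \<ge> 0)"

definition maximal_monotone :: "('a::real_inner \<Rightarrow> 'a set) \<Rightarrow> bool" where
  "maximal_monotone A \<longleftrightarrow> monotone_op A \<and>
     (\<forall>B. monotone_op B \<and> (\<forall>x. A x \<subseteq> B x) \<longrightarrow> B = A)"

text \<open>Resolvent (I + lam A)^{-1} x: the (unique, for maximal monotone A and lam > 0) y with
  x \<in> y + lam A y.\<close>
definition resolvent :: "('a::real_inner \<Rightarrow> 'a set) \<Rightarrow> real \<Rightarrow> 'a \<Rightarrow> 'a" where
  "resolvent A lam x = (THE y. \<exists>v \<in> A y. x = y + lam *\<^sub>R v)"

definition locally_lipschitz_on :: "real set \<Rightarrow> (real \<Rightarrow> real) \<Rightarrow> bool" where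
  "locally_lipschitz_on S f \<longleftrightarrow>
     (\<forall>t\<in>S. \<exists>e>0. \<exists>L. lipschitz_on L (S \<inter> cball t e) f)"

end

theory Submission
  imports Defs
begin

(* Write u t = x t - J (x t) with J = resolvent A (lam t), so that x' = -u and
   lam t * norm (u t) ^ (p - 1) = \<theta>. Freeze the index \<mu> = lam t. Since I - J\<^sub>\<mu> is firmly
   nonexpansive, the Euler step x s \<approx> x t - (s - t) u t raises norm (x - J\<^sub>\<mu> x) ^ 2 by o(s - t).
   If lam s < \<mu>, then norm (u s) \<le> norm (x s - J\<^sub>\<mu> (x s)) because \<nu> \<mapsto> norm (z - J\<^sub>\<nu> z) is
   nondecreasing, and the balance law together with Bernoulli's inequality gives
   lam s \<ge> lam t - o(s - t). A continuous function with nonnegative lower right Dini derivative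
   is nondecreasing. That the resolvent is well defined is Minty's theorem, proved by minimising
   the Fitzpatrick function of A plus half the squared norm. *)

lemma le_of_le_add_mult_near_0:
  fixes m B D :: real
  assumes "\<And>t. 0 < t \<Longrightarrow> t < 1 \<Longrightarrow> m \<le> B + t * D"
  shows "m \<le> B"
proof (rule tendsto_lowerbound)
  show "((\<lambda>t. B + t * D) \<longlongrightarrow> B) (at_right 0)"
    by (auto intro!: tendsto_eq_intros)
  show "\<forall>\<^sub>F t in at_right 0. m \<le> B + t * D"
    unfolding eventually_at_right_field by (intro exI[of _ 1]) (auto intro: assms)
qed simp

lemma Cauchy_if_dist_sq_le:
  fixes Y :: "nat \<Rightarrow> 'a::metric_space"
  assumes dist_sq: "\<And>n k. dist (Y n) (Y k) ^ 2 \<le> \<delta> n + \<delta> k" and "\<delta> \<longlonglongrightarrow> 0"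
  shows "Cauchy Y"
proof (rule metric_CauchyI)
  fix e :: real assume "0 < e"
  then have "\<forall>\<^sub>F n in sequentially. \<delta> n < e ^ 2 / 2"
    using \<open>\<delta> \<longlonglongrightarrow> 0\<close> by (intro order_tendstoD(2)) auto
  then obtain M where M: "\<And>n. n \<ge> M \<Longrightarrow> \<delta> n < e ^ 2 / 2"
    unfolding eventually_sequentially by blast
  have "dist (Y n) (Y k) < e" if "n \<ge> M" "k \<ge> M" for n k
  proof (rule power2_less_imp_less)
    show "dist (Y n) (Y k) ^ 2 < e ^ 2"
      using dist_sq[of n k] M[OF that(1)] M[OF that(2)] by linarith
  qed (use \<open>0 < e\<close> in simp)
  then show "\<exists>M. \<forall>n\<ge>M. \<forall>k\<ge>M. dist (Y n) (Y k) < e" by blast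
qed

lemma Bernoulli_product_le_one:
  fixes \<xi> :: real
  assumes "0 \<le> \<xi>"
  shows "(1 - n * \<xi>) * (1 + \<xi>) ^ n \<le> 1"
proof (cases "\<xi> \<le> 1")
  case True
  have "(1 - n * \<xi>) * (1 + \<xi>) ^ n \<le> (1 - \<xi>) ^ n * (1 + \<xi>) ^ n"
    using Bernoulli_inequality[of "- \<xi>" n] True assms by (intro mult_right_mono) auto
  also have "\<dots> = (1 - \<xi> ^ 2) ^ n"
    by (simp add: power_mult_distrib[symmetric] power2_eq_square algebra_simps)
  also have "\<dots> \<le> 1"
    using True assms by (intro power_le_one) (auto simp: power_le_one)
  finally show ?thesis .
next
  case False
  show ?thesis
  proof (cases n)
    case (Suc m)
    then have "1 * \<xi> \<le> n * \<xi>"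
      using assms by (intro mult_right_mono) auto
    then have "1 \<le> n * \<xi>"
      using False by linarith
    then have "(1 - n * \<xi>) * (1 + \<xi>) ^ n \<le> 0"
      using assms by (intro mult_nonpos_nonneg) auto
    then show ?thesis by simp
  qed simp
qed

lemma continuous_on_if_mult_norm_power_eq:
  fixes v :: "real \<Rightarrow> 'a::real_normed_vector" and lam :: "real \<Rightarrow> real"
  assumes "0 < \<theta>" and "continuous_on S v" and eq: "\<forall>t\<in>S. lam t * norm (v t) ^ q = \<theta>"
  shows "continuous_on S lam"
proof -
  have nz: "norm (v t) ^ q \<noteq> 0" if "t \<in> S" for t
  proof
    assume "norm (v t) ^ q = 0"
    then have "\<theta> = 0" using eq that by (metis mult_zero_right)
    with \<open>0 < \<theta>\<close> show False by simp
  qed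
  have "continuous_on S (\<lambda>t. \<theta> / norm (v t) ^ q)"
    using nz by (intro continuous_intros \<open>continuous_on S v\<close>) auto
  moreover have "\<theta> / norm (v t) ^ q = lam t" if "t \<in> S" for t
    using eq nz that by (simp add: field_simps)
  ultimately show ?thesis
    using continuous_on_eq by blast
qed

lemma continuous_right_Dini_lower_bound:
  fixes f :: "real \<Rightarrow> real"
  assumes cont: "continuous_on {a..b} f"
    and right: "\<And>t e. t \<in> {a..<b} \<Longrightarrow> 0 < e \<Longrightarrow>
      \<exists>d>0. \<forall>s\<in>{a..b}. t < s \<longrightarrow> s < t + d \<longrightarrow> f t - e * (s - t) \<le> f s"
    and r: "r \<in> {a..b}" and s: "s \<in> {a..b}" and "r \<le> s" and e: "0 < e"
  shows "f r - e * (s - r) \<le> f s"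
proof -
  define T where "T = {\<tau> \<in> {r..s}. f r - e * (\<tau> - r) \<le> f \<tau>}"
  have "closed T"
  proof -
    have "continuous_on {r..s} (\<lambda>\<tau>. f \<tau> - (f r - e * (\<tau> - r)))"
      using r s by (intro continuous_intros continuous_on_subset[OF cont]) auto
    then have "closed ({r..s} \<inter> (\<lambda>\<tau>. f \<tau> - (f r - e * (\<tau> - r))) -` {0..})"
      by (intro continuous_closed_preimage) auto
    moreover have "T = {r..s} \<inter> (\<lambda>\<tau>. f \<tau> - (f r - e * (\<tau> - r))) -` {0..}"
      unfolding T_def by auto
    ultimately show ?thesis by simp
  qed
  moreover have "r \<in> T" using \<open>r \<le> s\<close> unfolding T_def by simp
  moreover have bdd: "bdd_above T" unfolding T_def by (auto intro: bdd_aboveI[of _ s])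
  ultimately have "Sup T \<in> T" using closed_contains_Sup by blast
  then have sup: "r \<le> Sup T" "Sup T \<le> s" "f r - e * (Sup T - r) \<le> f (Sup T)"
    unfolding T_def by auto
  have "Sup T = s"
  proof (rule ccontr)
    assume "Sup T \<noteq> s"
    then have "Sup T \<in> {a..<b}" using sup r s by auto
    then obtain d where "d > 0"
      and d: "\<forall>s'\<in>{a..b}. Sup T < s' \<longrightarrow> s' < Sup T + d \<longrightarrow> f (Sup T) - e * (s' - Sup T) \<le> f s'"
      using right e by blast
    define \<tau> where "\<tau> = min (Sup T + d / 2) s"
    have \<tau>: "Sup T < \<tau>" "\<tau> < Sup T + d" "\<tau> \<in> {a..b}" "\<tau> \<le> s"
      using \<open>d > 0\<close> \<open>Sup T \<noteq> s\<close> sup r s unfolding \<tau>_def by auto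
    then have "f (Sup T) - e * (\<tau> - Sup T) \<le> f \<tau>" using d by blast
    with sup(3) have "\<tau> \<in> T" using \<tau> sup unfolding T_def by (auto simp: algebra_simps)
    then have "\<tau> \<le> Sup T" using bdd by (rule cSup_upper)
    with \<tau> show False by simp
  qed
  with sup show ?thesis by simp
qed

lemma mono_on_if_continuous_right_Dini:
  fixes f :: "real \<Rightarrow> real"
  assumes cont: "continuous_on {a..b} f"
    and right: "\<And>t e. t \<in> {a..<b} \<Longrightarrow> 0 < e \<Longrightarrow>
      \<exists>d>0. \<forall>s\<in>{a..b}. t < s \<longrightarrow> s < t + d \<longrightarrow> f t - e * (s - t) \<le> f s"
  shows "mono_on {a..b} f"
proof (rule mono_onI)
  fix r s assume "r \<in> {a..b}" "s \<in> {a..b}" "r \<le> s"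
  show "f r \<le> f s"
  proof (rule le_of_le_add_mult_near_0)
    fix e :: real assume "0 < e" "e < 1"
    then show "f r \<le> f s + e * (s - r)"
      using continuous_right_Dini_lower_bound[OF cont right \<open>r \<in> _\<close> \<open>s \<in> _\<close> \<open>r \<le> s\<close>] by force
  qed
qed

section \<open>Minimising a regularised supremum of affine functions\<close>

(* regularized_sup_le I a \<beta> z c says F z \<le> c for
   F w = (SUP i\<in>I. inner (a i) w + \<beta> i) + norm w ^ 2 / 2;
   as a predicate it avoids the supremum, which may be infinite. *)
definition regularized_sup_le :: "'i set \<Rightarrow> ('i \<Rightarrow> 'b::real_inner) \<Rightarrow> ('i \<Rightarrow> real) \<Rightarrow> 'b \<Rightarrow> real \<Rightarrow> bool"
  where "regularized_sup_le I a \<beta> z c \<longleftrightarrow> (\<forall>i\<in>I. inner (a i) z + \<beta> i + norm z ^ 2 / 2 \<le> c)"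

lemma regularized_sup_le_midpoint:
  assumes "regularized_sup_le I a \<beta> z c" and "regularized_sup_le I a \<beta> z' c'"
  shows "regularized_sup_le I a \<beta> (midpoint z z') ((c + c') / 2 - norm (z - z') ^ 2 / 8)"
  unfolding regularized_sup_le_def
proof
  fix i assume "i \<in> I"
  then have "inner (a i) z + \<beta> i + norm z ^ 2 / 2 \<le> c" "inner (a i) z' + \<beta> i + norm z' ^ 2 / 2 \<le> c'"
    using assms unfolding regularized_sup_le_def by blast+
  moreover have "inner (a i) (midpoint z z') = (inner (a i) z + inner (a i) z') / 2"
    unfolding midpoint_def by (simp add: inner_add_right)
  moreover have "norm (midpoint z z') ^ 2 = norm z ^ 2 / 2 + norm z' ^ 2 / 2 - norm (z - z') ^ 2 / 4"
  proof -
    have "norm (midpoint z z') ^ 2 = norm (z + z') ^ 2 / 4"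
      unfolding midpoint_def by (simp add: power_mult_distrib power2_eq_square)
    then show ?thesis
      unfolding power2_norm_eq_inner
      by (simp add: inner_add_left inner_add_right inner_diff_left inner_diff_right inner_commute) argo
  qed
  ultimately show "inner (a i) (midpoint z z') + \<beta> i + norm (midpoint z z') ^ 2 / 2
      \<le> (c + c') / 2 - norm (z - z') ^ 2 / 8"
    by argo
qed

lemma regularized_sup_le_lower_bound:
  assumes "regularized_sup_le I a \<beta> z c" and "i \<in> I"
  shows "\<beta> i - norm (a i) ^ 2 / 2 \<le> c"
proof -
  have "0 \<le> norm (z + a i) ^ 2" by simp
  also have "norm (z + a i) ^ 2 = norm z ^ 2 + 2 * inner (a i) z + norm (a i) ^ 2"
    unfolding power2_norm_eq_inner by (simp add: inner_add_left inner_add_right inner_commute)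
  finally show ?thesis
    using assms unfolding regularized_sup_le_def by fastforce
qed

lemma regularized_sup_attains_min:
  fixes a :: "'i \<Rightarrow> 'b::{real_inner,complete_space}"
  assumes "i0 \<in> I" and "regularized_sup_le I a \<beta> z0 c0"
  shows "\<exists>z m. regularized_sup_le I a \<beta> z m \<and> (\<forall>w c. regularized_sup_le I a \<beta> w c \<longrightarrow> m \<le> c)"
proof -
  define S where "S = {c. \<exists>z. regularized_sup_le I a \<beta> z c}"
  define m where "m = Inf S"
  have "c0 \<in> S" using assms(2) unfolding S_def by blast
  have bdd: "bdd_below S"
    using regularized_sup_le_lower_bound[OF _ \<open>i0 \<in> I\<close>] unfolding S_def bdd_below_def by blast
  have m_le: "m \<le> c" if "regularized_sup_le I a \<beta> w c" for w c
    unfolding m_def using that by (intro cInf_lower bdd) (auto simp: S_def)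
  have "\<exists>z c. regularized_sup_le I a \<beta> z c \<and> c < m + 1 / Suc n" for n
  proof -
    obtain c where "c \<in> S" "c < m + 1 / Suc n"
      using cInf_less_iff[of S "m + 1 / Suc n"] \<open>c0 \<in> S\<close> bdd unfolding m_def by auto
    then show ?thesis unfolding S_def by blast
  qed
  then obtain Z C where ZC: "\<And>n. regularized_sup_le I a \<beta> (Z n) (C n)"
    and C_upper: "\<And>n. C n < m + 1 / Suc n"
    by metis
  have C_lim: "C \<longlonglongrightarrow> m"
  proof (rule tendsto_sandwich[of "\<lambda>_. m" _ _ "\<lambda>n. m + 1 / Suc n"])
    show "\<forall>\<^sub>F n in sequentially. m \<le> C n" using m_le[OF ZC] by simp
    show "\<forall>\<^sub>F n in sequentially. C n \<le> m + 1 / Suc n" using C_upper by (simp add: less_imp_le)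
    show "(\<lambda>n. m + 1 / real (Suc n)) \<longlonglongrightarrow> m"
      using tendsto_add[OF tendsto_const LIMSEQ_Suc[OF lim_1_over_n]] by simp
  qed simp
  have "Cauchy Z"
  proof (rule Cauchy_if_dist_sq_le)
    fix n k
    have "m \<le> (C n + C k) / 2 - norm (Z n - Z k) ^ 2 / 8"
      by (rule m_le[OF regularized_sup_le_midpoint[OF ZC ZC]])
    then show "dist (Z n) (Z k) ^ 2 \<le> 4 * (C n - m) + 4 * (C k - m)"
      unfolding dist_norm by argo
    show "(\<lambda>n. 4 * (C n - m)) \<longlonglongrightarrow> 0"
      using tendsto_mult[OF tendsto_const[of 4] tendsto_diff[OF C_lim tendsto_const[of m]]] by simp
  qed
  then obtain z where Z_lim: "Z \<longlonglongrightarrow> z"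
    using Cauchy_convergent_iff convergent_def by blast
  have "regularized_sup_le I a \<beta> z m"
    unfolding regularized_sup_le_def
  proof
    fix i assume "i \<in> I"
    show "inner (a i) z + \<beta> i + norm z ^ 2 / 2 \<le> m"
    proof (rule LIMSEQ_le)
      show "(\<lambda>n. inner (a i) (Z n) + \<beta> i + norm (Z n) ^ 2 / 2) \<longlonglongrightarrow> inner (a i) z + \<beta> i + norm z ^ 2 / 2"
        by (intro tendsto_intros Z_lim) simp
      show "\<exists>N. \<forall>n\<ge>N. inner (a i) (Z n) + \<beta> i + norm (Z n) ^ 2 / 2 \<le> C n"
        using ZC \<open>i \<in> I\<close> unfolding regularized_sup_le_def by blast
    qed (rule C_lim)
  qed
  with m_le show ?thesis by blast
qed

lemma regularized_sup_min_variational_ineq: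
  assumes min: "regularized_sup_le I a \<beta> z m" "\<And>w c. regularized_sup_le I a \<beta> w c \<Longrightarrow> m \<le> c"
    and bound: "\<And>i. i \<in> I \<Longrightarrow> inner (a i) w + \<beta> i \<le> K"
  shows "m \<le> norm z ^ 2 / 2 + K + inner z (w - z)"
proof (rule le_of_le_add_mult_near_0)
  fix t :: real assume t: "0 < t" "t < 1"
  define zt where "zt = z + t *\<^sub>R (w - z)"
  have "regularized_sup_le I a \<beta> zt ((1 - t) * (m - norm z ^ 2 / 2) + t * K + norm zt ^ 2 / 2)"
    unfolding regularized_sup_le_def
  proof
    fix i assume "i \<in> I"
    have "inner (a i) z + \<beta> i \<le> m - norm z ^ 2 / 2"
      using min(1) \<open>i \<in> I\<close> unfolding regularized_sup_le_def by fastforce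
    then have "(1 - t) * (inner (a i) z + \<beta> i) + t * (inner (a i) w + \<beta> i)
        \<le> (1 - t) * (m - norm z ^ 2 / 2) + t * K"
      using bound[OF \<open>i \<in> I\<close>] t by (intro add_mono mult_left_mono) auto
    moreover have "inner (a i) zt + \<beta> i = (1 - t) * (inner (a i) z + \<beta> i) + t * (inner (a i) w + \<beta> i)"
      unfolding zt_def by (simp add: inner_add_right inner_diff_right algebra_simps)
    ultimately show "inner (a i) zt + \<beta> i + norm zt ^ 2 / 2
        \<le> (1 - t) * (m - norm z ^ 2 / 2) + t * K + norm zt ^ 2 / 2"
      by linarith
  qed
  then have "m \<le> (1 - t) * (m - norm z ^ 2 / 2) + t * K + norm zt ^ 2 / 2"
    by (rule min(2))
  moreover have "norm zt ^ 2 = norm z ^ 2 + 2 * t * inner z (w - z) + t ^ 2 * norm (w - z) ^ 2"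
    unfolding zt_def power2_norm_eq_inner
    by (simp add: inner_add_left inner_add_right inner_commute power2_eq_square algebra_simps)
  moreover have "(1 - t) * (m - norm z ^ 2 / 2) = m - norm z ^ 2 / 2 - t * m + t * norm z ^ 2 / 2"
    and "t * (norm z ^ 2 / 2 + K + inner z (w - z) + t * (norm (w - z) ^ 2 / 2))
      = t * norm z ^ 2 / 2 + t * K + t * inner z (w - z) + t ^ 2 * norm (w - z) ^ 2 / 2"
    by (simp_all add: field_simps power2_eq_square)
  ultimately have "t * m \<le> t * (norm z ^ 2 / 2 + K + inner z (w - z) + t * (norm (w - z) ^ 2 / 2))"
    by linarith
  then show "m \<le> norm z ^ 2 / 2 + K + inner z (w - z) + t * (norm (w - z) ^ 2 / 2)"
    using t by simp
qed

section \<open>Maximal monotone operators and Minty's theorem\<close>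

lemma maximal_monotone_iff:
  "maximal_monotone A \<longleftrightarrow> monotone_op A \<and>
     (\<forall>a b. (\<forall>y v. v \<in> A y \<longrightarrow> inner (a - y) (b - v) \<ge> 0) \<longrightarrow> b \<in> A a)"
proof
  assume mm: "maximal_monotone A"
  then have mA: "monotone_op A" unfolding maximal_monotone_def by blast
  have "b \<in> A a" if rel: "\<forall>y v. v \<in> A y \<longrightarrow> inner (a - y) (b - v) \<ge> 0" for a b
  proof -
    define B where "B = A(a := insert b (A a))"
    have "monotone_op B"
      unfolding monotone_op_def
    proof (intro allI impI)
      fix x y u v assume "u \<in> B x" "v \<in> B y"
      then consider "x = a" "u = b" "y = a" "v = b" | "x = a" "u = b" "v \<in> A y"
        | "u \<in> A x" "y = a" "v = b" | "u \<in> A x" "v \<in> A y"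
        unfolding B_def by (auto split: if_splits)
      then show "inner (x - y) (u - v) \<ge> 0"
      proof cases
        case 3
        have "inner (x - y) (u - v) = inner (a - x) (b - u)"
          using 3 by (simp add: inner_diff_left inner_diff_right)
        then show ?thesis using rel 3 by simp
      qed (use rel mA in \<open>auto simp: monotone_op_def\<close>)
    qed
    moreover have "\<forall>x. A x \<subseteq> B x" unfolding B_def by auto
    ultimately have "B = A" using mm unfolding maximal_monotone_def by blast
    then show ?thesis unfolding B_def by (metis fun_upd_same insertI1)
  qed
  with mA show "monotone_op A \<and> (\<forall>a b. (\<forall>y v. v \<in> A y \<longrightarrow> inner (a - y) (b - v) \<ge> 0) \<longrightarrow> b \<in> A a)"
    by blast
next
  assume "monotone_op A \<and> (\<forall>a b. (\<forall>y v. v \<in> A y \<longrightarrow> inner (a - y) (b - v) \<ge> 0) \<longrightarrow> b \<in> A a)"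
  then have mA: "monotone_op A"
    and max: "\<And>a b. (\<And>y v. v \<in> A y \<Longrightarrow> inner (a - y) (b - v) \<ge> 0) \<Longrightarrow> b \<in> A a"
    by blast+
  have "B = A" if mB: "monotone_op B" and sub: "\<forall>x. A x \<subseteq> B x" for B
  proof (intro ext equalityI)
    fix a show "B a \<subseteq> A a"
      using mB sub by (force intro: max simp: monotone_op_def)
  qed (use sub in blast)
  with mA show "maximal_monotone A" unfolding maximal_monotone_def by blast
qed

lemma maximal_monotone_graph_nonempty:
  assumes "maximal_monotone A"
  shows "\<exists>y v. v \<in> A y"
proof (rule ccontr)
  assume empty: "\<not> (\<exists>y v. v \<in> A y)"
  have "(0::'a) \<in> A 0"
    using assms empty unfolding maximal_monotone_iff by blast
  with empty show False by blast
qed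

lemma maximal_monotone_shift_scale:
  assumes mm: "maximal_monotone A" and lam: "0 < lam"
  shows "maximal_monotone (\<lambda>w. (*\<^sub>R) lam ` A (w + z))"
  unfolding maximal_monotone_iff
proof (intro conjI allI impI)
  have mA: "monotone_op A" and max: "\<And>a b. (\<forall>y v. v \<in> A y \<longrightarrow> inner (a - y) (b - v) \<ge> 0) \<Longrightarrow> b \<in> A a"
    using mm unfolding maximal_monotone_iff by blast+
  show "monotone_op (\<lambda>w. (*\<^sub>R) lam ` A (w + z))"
    unfolding monotone_op_def
  proof (intro allI impI)
    fix x y u v assume "u \<in> (*\<^sub>R) lam ` A (x + z)" "v \<in> (*\<^sub>R) lam ` A (y + z)"
    then obtain u0 v0 where "u0 \<in> A (x + z)" "v0 \<in> A (y + z)" "u = lam *\<^sub>R u0" "v = lam *\<^sub>R v0"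
      by blast
    moreover have "inner ((x + z) - (y + z)) (u0 - v0) \<ge> 0"
      using mA calculation(1,2) unfolding monotone_op_def by blast
    ultimately show "inner (x - y) (u - v) \<ge> 0"
      using lam by (simp add: scaleR_diff_right[symmetric])
  qed
  fix a b
  assume rel: "\<forall>y v. v \<in> (*\<^sub>R) lam ` A (y + z) \<longrightarrow> 0 \<le> inner (a - y) (b - v)"
  have "(1 / lam) *\<^sub>R b \<in> A (a + z)"
  proof (rule max, intro allI impI)
    fix y v assume "v \<in> A y"
    then have "lam *\<^sub>R v \<in> (*\<^sub>R) lam ` A ((y - z) + z)" by (simp add: imageI)
    then have "0 \<le> inner (a - (y - z)) (b - lam *\<^sub>R v)" using rel by blast
    also have "inner (a - (y - z)) (b - lam *\<^sub>R v) = lam * inner (a + z - y) ((1 / lam) *\<^sub>R b - v)"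
      using lam by (simp add: inner_diff_right algebra_simps)
    finally show "0 \<le> inner (a + z - y) ((1 / lam) *\<^sub>R b - v)"
      using lam by (simp add: zero_le_mult_iff)
  qed
  then show "b \<in> (*\<^sub>R) lam ` A (a + z)"
    using lam by (intro image_eqI[of _ _ "(1 / lam) *\<^sub>R b"]) auto
qed

lemma maximal_monotone_neg_fixpoint:
  fixes A :: "'a::{real_inner,complete_space} \<Rightarrow> 'a set"
  assumes mm: "maximal_monotone A"
  shows "\<exists>a. - a \<in> A a"
proof -
  have mA: "monotone_op A"
    and max: "\<And>a b. (\<forall>y v. v \<in> A y \<longrightarrow> inner (a - y) (b - v) \<ge> 0) \<Longrightarrow> b \<in> A a"
    using mm unfolding maximal_monotone_iff by blast+
  \<comment> \<open>Minimise the Fitzpatrick function of A plus half the squared norm on 'a \<times> 'a;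
    a minimiser (x, u) yields the fixed point (x - u) / 2.\<close>
  define I where "I = {(y, v). v \<in> A y}"
  define \<beta> where "\<beta> w = - inner (fst w) (snd w)" for w :: "'a \<times> 'a"
  have graph_bound: "inner (prod.swap w) w' + \<beta> w \<le> inner (fst w') (snd w')" if "w \<in> I" "w' \<in> I" for w w'
  proof -
    have "0 \<le> inner (fst w' - fst w) (snd w' - snd w)"
      using mA that unfolding I_def monotone_op_def by (auto split: prod.splits)
    then show ?thesis
      unfolding \<beta>_def by (cases w, cases w') (simp add: inner_diff_left inner_diff_right inner_commute)
  qed
  obtain y0 v0 where "v0 \<in> A y0" using maximal_monotone_graph_nonempty[OF mm] by blast
  then have "(y0, v0) \<in> I" unfolding I_def by simp
  then have "regularized_sup_le I prod.swap \<beta> (y0, v0) (inner y0 v0 + norm (y0, v0) ^ 2 / 2)"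
    unfolding regularized_sup_le_def using graph_bound by fastforce
  then obtain z m where z_min: "regularized_sup_le I prod.swap \<beta> z m"
    and m_min: "\<And>w c. regularized_sup_le I prod.swap \<beta> w c \<Longrightarrow> m \<le> c"
    using regularized_sup_attains_min[OF \<open>(y0, v0) \<in> I\<close>] by blast
  obtain x u where z: "z = (x, u)" by fastforce
  have "- ((1 / 2) *\<^sub>R (x - u)) \<in> A ((1 / 2) *\<^sub>R (x - u))"
  proof (rule max, intro allI impI)
    fix y v assume "v \<in> A y"
    then have "(y, v) \<in> I" unfolding I_def by simp
    have "m \<le> norm z ^ 2 / 2 + inner y v + inner z ((y, v) - z)"
      using regularized_sup_min_variational_ineq[OF z_min m_min graph_bound[OF _ \<open>(y, v) \<in> I\<close>]]
      by simp
    moreover have "inner (prod.swap (y, v)) z + \<beta> (y, v) + norm z ^ 2 / 2 \<le> m"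
      using z_min \<open>(y, v) \<in> I\<close> unfolding regularized_sup_le_def by blast
    moreover have "4 * inner ((1 / 2) *\<^sub>R (x - u) - y) (- ((1 / 2) *\<^sub>R (x - u)) - v)
        = 2 * (inner y v + inner z ((y, v) - z) - inner (prod.swap (y, v)) z - \<beta> (y, v)) + inner (x + u) (x + u)"
      unfolding z \<beta>_def
      by (simp add: inner_add_left inner_add_right inner_diff_left inner_diff_right inner_commute algebra_simps)
    moreover have "0 \<le> inner (x + u) (x + u)" by simp
    ultimately show "0 \<le> inner ((1 / 2) *\<^sub>R (x - u) - y) (- ((1 / 2) *\<^sub>R (x - u)) - v)"
      by argo
  qed
  then show ?thesis by blast
qed

lemma minty_surjectivity:
  fixes A :: "'a::{real_inner,complete_space} \<Rightarrow> 'a set"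
  assumes "maximal_monotone A" and "0 < lam"
  shows "\<exists>y. \<exists>v\<in>A y. z = y + lam *\<^sub>R v"
proof -
  obtain a where "- a \<in> (*\<^sub>R) lam ` A (a + z)"
    using maximal_monotone_neg_fixpoint[OF maximal_monotone_shift_scale[OF assms]] by blast
  then obtain v where "v \<in> A (a + z)" "- a = lam *\<^sub>R v" by blast
  then have "z = (a + z) + lam *\<^sub>R v" by (simp flip: \<open>- a = lam *\<^sub>R v\<close>)
  with \<open>v \<in> A (a + z)\<close> show ?thesis by blast
qed

lemma resolvent_eqI:
  assumes mA: "monotone_op A" and lam: "0 < lam" and v: "v \<in> A y" and z: "z = y + lam *\<^sub>R v"
  shows "resolvent A lam z = y"
  unfolding resolvent_def
proof (rule the_equality)
  show "\<exists>v\<in>A y. z = y + lam *\<^sub>R v" using v z by blast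
next
  fix y' assume "\<exists>v'\<in>A y'. z = y' + lam *\<^sub>R v'"
  then obtain v' where v': "v' \<in> A y'" "z = y' + lam *\<^sub>R v'" by blast
  have diff: "y' - y = lam *\<^sub>R (v - v')" using v'(2) z by (simp add: algebra_simps)
  have "0 \<le> inner (y' - y) (v' - v)" using mA v v'(1) unfolding monotone_op_def by blast
  also have "inner (y' - y) (v' - v) = - lam * norm (v - v') ^ 2"
    unfolding diff power2_norm_eq_inner by (simp add: inner_diff_right algebra_simps)
  finally have "v = v'" using lam by (simp add: mult_le_0_iff)
  then show "y' = y" using diff by simp
qed

lemma resolvent_mem:
  fixes A :: "'a::{real_inner,complete_space} \<Rightarrow> 'a set"
  assumes mm: "maximal_monotone A" and lam: "0 < lam"
  shows "(1 / lam) *\<^sub>R (z - resolvent A lam z) \<in> A (resolvent A lam z)"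
proof -
  obtain y v where v: "v \<in> A y" and z: "z = y + lam *\<^sub>R v"
    using minty_surjectivity[OF assms] by blast
  have "monotone_op A" using mm unfolding maximal_monotone_def by blast
  then have "resolvent A lam z = y" using lam v z by (rule resolvent_eqI)
  then show ?thesis using v z lam by simp
qed

lemma resolvent_residual_firmly_nonexpansive:
  fixes A :: "'a::{real_inner,complete_space} \<Rightarrow> 'a set"
  assumes mm: "maximal_monotone A" and lam: "0 < lam"
  shows "norm ((a - resolvent A lam a) - (b - resolvent A lam b)) ^ 2
    \<le> inner (a - b) ((a - resolvent A lam a) - (b - resolvent A lam b))"
proof -
  define ra where "ra = a - resolvent A lam a"
  define rb where "rb = b - resolvent A lam b"
  have "(1 / lam) *\<^sub>R ra \<in> A (resolvent A lam a)" "(1 / lam) *\<^sub>R rb \<in> A (resolvent A lam b)"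
    unfolding ra_def rb_def using resolvent_mem[OF mm lam] by blast+
  then have "0 \<le> inner (resolvent A lam a - resolvent A lam b) ((1 / lam) *\<^sub>R ra - (1 / lam) *\<^sub>R rb)"
    using mm unfolding maximal_monotone_def monotone_op_def by blast
  also have "\<dots> = (1 / lam) * inner ((a - b) - (ra - rb)) (ra - rb)"
    unfolding ra_def rb_def by (simp add: scaleR_diff_right[symmetric])
  finally have "0 \<le> inner ((a - b) - (ra - rb)) (ra - rb)"
    using lam by (simp add: zero_le_divide_iff)
  then show ?thesis
    unfolding ra_def[symmetric] rb_def[symmetric] power2_norm_eq_inner by (simp add: inner_diff_left)
qed

lemma norm_resolvent_residual_mono:
  fixes A :: "'a::{real_inner,complete_space} \<Rightarrow> 'a set"
  assumes mm: "maximal_monotone A" and lam1: "0 < lam1" and lam12: "lam1 \<le> lam2"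
  shows "norm (z - resolvent A lam1 z) \<le> norm (z - resolvent A lam2 z)"
proof -
  have lam2: "0 < lam2" using lam1 lam12 by simp
  define v1 where "v1 = (1 / lam1) *\<^sub>R (z - resolvent A lam1 z)"
  define v2 where "v2 = (1 / lam2) *\<^sub>R (z - resolvent A lam2 z)"
  have res1: "z - resolvent A lam1 z = lam1 *\<^sub>R v1" and res2: "z - resolvent A lam2 z = lam2 *\<^sub>R v2"
    unfolding v1_def v2_def using lam1 lam2 by simp_all
  have "0 \<le> inner (resolvent A lam1 z - resolvent A lam2 z) (v1 - v2)"
    using resolvent_mem[OF mm lam1] resolvent_mem[OF mm lam2] mm
    unfolding v1_def v2_def maximal_monotone_def monotone_op_def by blast
  also have "resolvent A lam1 z - resolvent A lam2 z = lam2 *\<^sub>R v2 - lam1 *\<^sub>R v1"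
    using res1 res2 by (simp add: algebra_simps)
  also have "inner (lam2 *\<^sub>R v2 - lam1 *\<^sub>R v1) (v1 - v2)
      = (lam1 + lam2) * inner v1 v2 - lam1 * norm v1 ^ 2 - lam2 * norm v2 ^ 2"
    by (simp add: power2_norm_eq_inner inner_diff_left inner_diff_right inner_commute algebra_simps)
  also have "\<dots> \<le> (lam1 + lam2) * (norm v1 * norm v2) - lam1 * norm v1 ^ 2 - lam2 * norm v2 ^ 2"
    using norm_cauchy_schwarz[of v1 v2] lam1 lam2 by (simp add: mult_left_mono)
  also have "\<dots> = (lam1 * norm v1 - lam2 * norm v2) * (norm v2 - norm v1)"
    by (simp add: field_simps power2_eq_square)
  finally have prod_nonneg: "0 \<le> (lam1 * norm v1 - lam2 * norm v2) * (norm v2 - norm v1)" .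
  have "lam1 * norm v1 \<le> lam2 * norm v2"
  proof (rule ccontr)
    assume "\<not> ?thesis"
    moreover have "lam1 * norm v2 \<le> lam2 * norm v2" using lam12 by (simp add: mult_right_mono)
    ultimately have "lam1 * norm v2 < lam1 * norm v1" by linarith
    then have "norm v2 < norm v1" using lam1 by simp
    with \<open>\<not> ?thesis\<close> have "(lam1 * norm v1 - lam2 * norm v2) * (norm v2 - norm v1) < 0"
      by (intro mult_pos_neg) auto
    with prod_nonneg show False by simp
  qed
  then show ?thesis using res1 res2 lam1 lam2 by simp
qed

lemma norm_resolvent_residual_Euler_step:
  fixes A :: "'a::{real_inner,complete_space} \<Rightarrow> 'a set"
  assumes mm: "maximal_monotone A" and lam: "0 < lam" and h: "0 < h" "h \<le> 1"
    and step: "norm (y - x + h *\<^sub>R (x - resolvent A lam x)) \<le> \<eta> * h"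
  shows "norm (y - resolvent A lam y) ^ 2 \<le> norm (x - resolvent A lam x) ^ 2 + \<eta> ^ 2 * h"
proof -
  define u where "u = x - resolvent A lam x"
  define w where "w = y - resolvent A lam y"
  define r where "r = y - x + h *\<^sub>R u"
  define D where "D = norm (w - u)"
  define I where "I = inner u (w - u)"
  have "D ^ 2 \<le> inner (y - x) (w - u)"
    unfolding D_def u_def w_def using resolvent_residual_firmly_nonexpansive[OF mm lam, of y x] by simp
  also have "\<dots> = inner r (w - u) - h * I"
    unfolding r_def I_def by (simp add: inner_add_left)
  also have "inner r (w - u) \<le> norm r * D"
    unfolding D_def by (rule norm_cauchy_schwarz)
  finally have firm: "D ^ 2 \<le> norm r * D - h * I" by simp
  have "norm w ^ 2 = norm u ^ 2 + 2 * I + D ^ 2"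
    unfolding D_def I_def power2_norm_eq_inner by (simp add: inner_diff_left inner_diff_right inner_commute)
  then have "h * (norm w ^ 2 - norm u ^ 2) = 2 * (h * I) + h * D ^ 2"
    by (simp add: algebra_simps)
  also have "\<dots> \<le> 2 * norm r * D - D ^ 2"
    using firm mult_left_le_one_le[of "D ^ 2" h] h by simp
  also have "\<dots> \<le> norm r ^ 2"
    using zero_le_power2[of "norm r - D"] by (simp add: power2_eq_square algebra_simps)
  also have "\<dots> \<le> (\<eta> * h) ^ 2"
    using step unfolding r_def u_def by (intro power_mono) auto
  finally have "h * (norm w ^ 2 - norm u ^ 2) \<le> h * (\<eta> ^ 2 * h)"
    by (simp add: power2_eq_square algebra_simps)
  then show ?thesis
    using h unfolding u_def w_def by simp
qed

lemma resolvent_index_lower_bound: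
  fixes A :: "'a::{real_inner,complete_space} \<Rightarrow> 'a set"
  assumes mm: "maximal_monotone A" and \<mu>: "0 < \<mu>" and \<nu>: "0 < \<nu>" and h: "0 < h" "h \<le> 1"
    and nz: "x \<noteq> resolvent A \<mu> x"
    and balance: "\<mu> * norm (x - resolvent A \<mu> x) ^ q \<le> \<nu> * norm (y - resolvent A \<nu> y) ^ q"
    and step: "norm (y - x + h *\<^sub>R (x - resolvent A \<mu> x)) \<le> \<eta> * h"
    and small: "\<mu> * q * \<eta> ^ 2 \<le> e * norm (x - resolvent A \<mu> x) ^ 2"
  shows "\<mu> - e * h \<le> \<nu>"
proof -
  define n0 where "n0 = norm (x - resolvent A \<mu> x)"
  have n0: "0 < n0" using nz unfolding n0_def by simp
  have "0 \<le> \<mu> * q * \<eta> ^ 2" using \<mu> by simp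
  with small have "0 \<le> e * n0 ^ 2" unfolding n0_def by linarith
  then have "0 \<le> e" using n0 by (simp add: zero_le_mult_iff)
  show ?thesis
  proof (cases "\<mu> \<le> \<nu>")
    case True
    have "0 \<le> e * h" using \<open>0 \<le> e\<close> h by simp
    with True show ?thesis by linarith
  next
    case False
    define n1 where "n1 = norm (y - resolvent A \<mu> y)"
    define \<xi> where "\<xi> = \<eta> ^ 2 * h / n0 ^ 2"
    have \<xi>: "0 \<le> \<xi>" unfolding \<xi>_def using h by simp
    have "n1 ^ 2 \<le> n0 ^ 2 + \<eta> ^ 2 * h"
      using norm_resolvent_residual_Euler_step[OF mm \<mu> h step] unfolding n0_def n1_def .
    also have "\<dots> = n0 ^ 2 * (1 + \<xi>)"
      unfolding \<xi>_def using n0 by (simp add: field_simps)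
    also have "\<dots> \<le> n0 ^ 2 * ((1 + \<xi>) * (1 + \<xi>))"
      using mult_right_mono[of 1 "1 + \<xi>" "1 + \<xi>"] \<xi> by (intro mult_left_mono) auto
    also have "\<dots> = (n0 * (1 + \<xi>)) ^ 2"
      by (simp add: power2_eq_square)
    finally have "n1 ^ 2 \<le> (n0 * (1 + \<xi>)) ^ 2" .
    then have "n1 \<le> n0 * (1 + \<xi>)"
      by (rule power2_le_imp_le) (use n0 \<xi> in simp)
    have "\<mu> * n0 ^ q \<le> \<nu> * norm (y - resolvent A \<nu> y) ^ q"
      using balance unfolding n0_def .
    also have "\<dots> \<le> \<nu> * n1 ^ q"
      unfolding n1_def using norm_resolvent_residual_mono[OF mm \<nu>] False \<nu>
      by (intro mult_left_mono power_mono) auto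
    also have "\<dots> \<le> \<nu> * (n0 * (1 + \<xi>)) ^ q"
      using \<open>n1 \<le> n0 * (1 + \<xi>)\<close> \<nu> unfolding n1_def by (intro mult_left_mono power_mono) auto
    also have "\<dots> = n0 ^ q * (\<nu> * (1 + \<xi>) ^ q)"
      by (simp add: power_mult_distrib)
    finally have "\<mu> \<le> \<nu> * (1 + \<xi>) ^ q"
      using n0 by (simp add: mult.commute[of \<mu>])
    have "\<mu> * (1 - q * \<xi>) \<le> \<nu>"
    proof (cases "q * \<xi> \<le> 1")
      case True
      then have "\<mu> * (1 - q * \<xi>) \<le> \<nu> * (1 + \<xi>) ^ q * (1 - q * \<xi>)"
        using \<open>\<mu> \<le> \<nu> * (1 + \<xi>) ^ q\<close> by (intro mult_right_mono) auto
      also have "\<dots> = \<nu> * ((1 - q * \<xi>) * (1 + \<xi>) ^ q)"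
        by simp
      also have "\<dots> \<le> \<nu>"
        using Bernoulli_product_le_one[OF \<xi>, of q] \<nu> by (intro mult_left_le) auto
      finally show ?thesis .
    next
      case False
      then have "\<mu> * (1 - q * \<xi>) \<le> 0"
        using \<mu> by (intro mult_nonneg_nonpos) auto
      with \<nu> show ?thesis by linarith
    qed
    moreover have "\<mu> * q * \<xi> \<le> e * h"
    proof -
      have "\<mu> * q * \<xi> = \<mu> * q * \<eta> ^ 2 * h / n0 ^ 2" unfolding \<xi>_def by simp
      also have "\<dots> \<le> e * n0 ^ 2 * h / n0 ^ 2"
        using small h unfolding n0_def by (intro divide_right_mono mult_right_mono) auto
      finally show ?thesis using n0 by simp
    qed
    moreover have "\<mu> * (1 - q * \<xi>) = \<mu> - \<mu> * q * \<xi>"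
      by (simp add: right_diff_distrib)
    ultimately show ?thesis by linarith
  qed
qed

section \<open>Monotonicity of the index\<close>

lemma balanced_resolvent_index_right_Dini:
  fixes A :: "'a::{real_inner,complete_space} \<Rightarrow> 'a set"
    and x :: "real \<Rightarrow> 'a" and lam :: "real \<Rightarrow> real"
  assumes mm: "maximal_monotone A" and \<theta>: "0 < \<theta>" and q: "1 \<le> q"
    and lam_pos: "\<forall>s\<in>S. 0 < lam s"
    and balance: "\<forall>s\<in>S. lam s * norm (x s - resolvent A (lam s) (x s)) ^ q = \<theta>"
    and t: "t \<in> S"
    and deriv: "(x has_vector_derivative - (x t - resolvent A (lam t) (x t))) (at t within S)"
    and e: "0 < e"
  shows "\<exists>d>0. \<forall>s\<in>S. t < s \<longrightarrow> s < t + d \<longrightarrow> lam t - e * (s - t) \<le> lam s"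
proof -
  define u where "u = x t - resolvent A (lam t) (x t)"
  have \<mu>: "0 < lam t" using lam_pos t by blast
  have "lam t * norm u ^ q = \<theta>" using balance t unfolding u_def by blast
  then have "u \<noteq> 0" using \<theta> q by (auto simp: zero_power)
  define \<eta> where "\<eta> = sqrt (e * norm u ^ 2 / (lam t * q))"
  have small: "lam t * q * \<eta> ^ 2 \<le> e * norm u ^ 2"
    unfolding \<eta>_def using e \<mu> q by simp
  have "0 < \<eta>" unfolding \<eta>_def using e \<mu> q \<open>u \<noteq> 0\<close> by simp
  then obtain d where "0 < d"
    and d: "\<forall>s\<in>S. norm (s - t) < d \<longrightarrow> norm (x s - x t - (s - t) *\<^sub>R (- u)) \<le> \<eta> * norm (s - t)"
    using deriv unfolding u_def has_vector_derivative_def has_derivative_within_alt by blast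
  have "lam t - e * (s - t) \<le> lam s" if s: "s \<in> S" "t < s" "s < t + min d 1" for s
  proof (rule resolvent_index_lower_bound[OF mm \<mu>])
    show "0 < lam s" using lam_pos s by blast
    show "0 < s - t" "s - t \<le> 1" using s by auto
    show "x t \<noteq> resolvent A (lam t) (x t)" using \<open>u \<noteq> 0\<close> unfolding u_def by simp
    show "lam t * norm (x t - resolvent A (lam t) (x t)) ^ q
        \<le> lam s * norm (x s - resolvent A (lam s) (x s)) ^ q"
      using balance t s by simp
    have "norm (s - t) < d" using s by simp
    then have "norm (x s - x t - (s - t) *\<^sub>R (- u)) \<le> \<eta> * norm (s - t)" using d s by blast
    then show "norm (x s - x t + (s - t) *\<^sub>R (x t - resolvent A (lam t) (x t))) \<le> \<eta> * (s - t)"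
      using s unfolding u_def[symmetric] by simp
    show "lam t * q * \<eta> ^ 2 \<le> e * norm (x t - resolvent A (lam t) (x t)) ^ 2"
      using small unfolding u_def .
  qed
  with \<open>0 < d\<close> show ?thesis by (intro exI[of _ "min d 1"]) auto
qed

theorem lemma2p5:
  fixes A :: "'a::{real_inner,complete_space} \<Rightarrow> 'a set"
    and x x' :: "real \<Rightarrow> 'a" and lam :: "real \<Rightarrow> real"
    and \<theta> t0 :: real and p :: nat
  assumes maxmono: "maximal_monotone A"
    and zer: "\<exists>z. 0 \<in> A z"
    and theta_pos: "\<theta> > 0"
    and p_ge: "p \<ge> 1"
    and t0_pos: "t0 > 0"
    and lam_pos: "\<forall>t\<in>{0..t0}. lam t > 0"
    and deriv: "\<forall>t\<in>{0..t0}. (x has_vector_derivative x' t) (at t within {0..t0})"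
    and deriv_cont: "continuous_on {0..t0} x'"
    and lam_lip: "locally_lipschitz_on {0..t0} lam"
    and ode: "\<forall>t\<in>{0..t0}. x' t + x t - resolvent A (lam t) (x t) = 0"
    and alg: "\<forall>t\<in>{0..t0}. lam t * norm (resolvent A (lam t) (x t) - x t) ^ (p - 1) = \<theta>"
    and init: "0 \<notin> A (x 0)"
  shows "mono_on {0..t0} lam"
proof (cases "p = 1")
  case True
  then show ?thesis using alg by (intro mono_onI) simp
next
  case False
  define q where "q = p - 1"
  have q: "1 \<le> q" using p_ge False unfolding q_def by simp
  have x': "x' t = - (x t - resolvent A (lam t) (x t))" if "t \<in> {0..t0}" for t
    using ode that by (simp add: algebra_simps)
  have balance: "\<forall>t\<in>{0..t0}. lam t * norm (x t - resolvent A (lam t) (x t)) ^ q = \<theta>"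
    using alg unfolding q_def by (simp add: norm_minus_commute)
  have "\<forall>t\<in>{0..t0}. lam t * norm (x' t) ^ q = \<theta>"
    using balance by (simp add: x' norm_minus_commute)
  with theta_pos deriv_cont have "continuous_on {0..t0} lam"
    by (rule continuous_on_if_mult_norm_power_eq)
  then show ?thesis
  proof (rule mono_on_if_continuous_right_Dini)
    fix t e :: real assume "t \<in> {0..<t0}" "0 < e"
    then show "\<exists>d>0. \<forall>s\<in>{0..t0}. t < s \<longrightarrow> s < t + d \<longrightarrow> lam t - e * (s - t) \<le> lam s"
      using deriv x' by (intro balanced_resolvent_index_right_Dini[OF maxmono theta_pos q lam_pos balance]) auto
  qed
qed

end
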